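(* Let $\mathcal{F}$ be a hypothesis class of functions $\mathcal{X}\to\{\pm1\}$, $\mathcal{P}$ a distribution on $\mathcal{X}\times\{\pm1\}$, and $G\subseteq\mathcal{F}$. If a true risk minimizer $f^*$ of $\mathcal{P}$ (i.e. a minimizer of $R_{\mathcal{P}}$ over $\mathcal{F}$) belongs to $G$, then $f^*$ is also a true risk minimizer under the distribution $\mathcal{P}(G)$, i.e. $f^*$ minimizes $R_{\mathcal{P}(G)}$ over $\mathcal{F}$.
   Context: $AGR(G)=\{x\in\mathcal{X}:f_1(x)=f_2(x)\ \forall f_1,f_2\in G\}$. $\mathcal{P}(G)$ is the distribution of $(X,Y')$ where $(X,Y)\sim\mathcal{P}$ and $Y'$ is the common value of the functions of $G$ at $X$ if $X\in AGR(G)$, and $Y'=Y$ otherwise. $R_{\mathcal{P}}(f)=\Pr_{\mathcal{P}}[f(X)\ne Y]$, $R_{\mathcal{P}(G)}(f)=\Pr_{\mathcal{P}(G)}[f(X)\ne Y']$. (In the paper $G$ is a low-error set $G_t$ produced by the Active-ILESS algorithm, which relabels examples in $AGR(G_t)$ by the unanimous value.) *)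

theory Defs
  imports "HOL-Probability.Probability"
begin

text \<open>Labels in {+1,-1} are represented by bool (True = +1, False = -1).\<close>

definition AGR :: "('x \<Rightarrow> bool) set \<Rightarrow> 'x set" where
  "AGR G = {x. \<forall>f1\<in>G. \<forall>f2\<in>G. f1 x = f2 x}"

definition relabel :: "('x \<Rightarrow> bool) set \<Rightarrow> 'x \<times> bool \<Rightarrow> 'x \<times> bool" where
  "relabel G = (\<lambda>(x, y). if x \<in> AGR G \<and> G \<noteq> {} then (x, (SOME f. f \<in> G) x) else (x, y))"

definition relabeled_dist :: "('x \<times> bool) measure \<Rightarrow> ('x \<Rightarrow> bool) set \<Rightarrow> ('x \<times> bool) measure" where
  "relabeled_dist P G = distr P P (relabel G)"

definition risk :: "('x \<times> bool) measure \<Rightarrow> ('x \<Rightarrow> bool) \<Rightarrow> real" where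
  "risk P f = measure P {z \<in> space P. f (fst z) \<noteq> snd z}"

definition is_risk_minimizer :: "('x \<times> bool) measure \<Rightarrow> ('x \<Rightarrow> bool) set \<Rightarrow> ('x \<Rightarrow> bool) \<Rightarrow> bool" where
  "is_risk_minimizer P F f \<longleftrightarrow> f \<in> F \<and> (\<forall>g\<in>F. risk P f \<le> risk P g)"

end

theory Submission
  imports Defs
begin

text \<open>On AGR G every member of G, in particular f*, predicts the relabelled label, so under the
  relabelled distribution f* loses exactly its P-errors inside AGR G. Any other g loses at
  most that much: wherever g erred under P inside AGR G but is correct after relabelling,
  g agrees with f* there and hence f* erred too. So relabelling lowers the risk of f* by at
  least as much as that of any competitor, and f* remains a minimiser.\<close>

definition relabel_on :: "'x set \<Rightarrow> ('x \<Rightarrow> bool) \<Rightarrow> 'x \<times> bool \<Rightarrow> 'x \<times> bool" where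
  "relabel_on A f z = (if fst z \<in> A then (fst z, f (fst z)) else z)"

lemma relabel_eq_relabel_on:
  assumes "f \<in> G"
  shows "relabel G = relabel_on (AGR G) f"
proof -
  have "(SOME f. f \<in> G) \<in> G" using assms by (rule someI[where P="\<lambda>f. f \<in> G"])
  then have "(SOME f. f \<in> G) x = f x" if "x \<in> AGR G" for x
    using that assms unfolding AGR_def by blast
  then show ?thesis
    using assms by (auto simp: relabel_def relabel_on_def fun_eq_iff)
qed

lemma pred_fst_in_pair_count_space:
  assumes "A \<inter> space Mx \<in> sets Mx"
  shows "Measurable.pred (Mx \<Otimes>\<^sub>M count_space UNIV) (\<lambda>z. fst z \<in> A)"
proof -
  have "{z \<in> space (Mx \<Otimes>\<^sub>M count_space UNIV). fst z \<in> A} = (A \<inter> space Mx) \<times> UNIV"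
    by (auto simp: space_pair_measure)
  also have "\<dots> \<in> sets (Mx \<Otimes>\<^sub>M count_space UNIV)"
    using assms by auto
  finally show ?thesis
    unfolding pred_def by (simp add: Collect_conj_eq)
qed

lemma measurable_relabel_on:
  assumes "f \<in> Mx \<rightarrow>\<^sub>M count_space UNIV" and "A \<inter> space Mx \<in> sets Mx"
  shows "relabel_on A f \<in> Mx \<Otimes>\<^sub>M count_space UNIV \<rightarrow>\<^sub>M Mx \<Otimes>\<^sub>M count_space UNIV"
  unfolding relabel_on_def
  using assms(1) pred_fst_in_pair_count_space[OF assms(2)] by measurable

lemma risk_distr_relabel_on:
  fixes P :: "('x \<times> bool) measure"
  assumes sets_P: "sets P = sets (Mx \<Otimes>\<^sub>M count_space UNIV)"
    and f: "f \<in> Mx \<rightarrow>\<^sub>M count_space UNIV" and g: "g \<in> Mx \<rightarrow>\<^sub>M count_space UNIV"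
    and A: "A \<inter> space Mx \<in> sets Mx"
  shows "risk (distr P P (relabel_on A f)) g =
    measure P {z \<in> space P. if fst z \<in> A then g (fst z) \<noteq> f (fst z) else g (fst z) \<noteq> snd z}"
proof -
  have relabel_meas: "relabel_on A f \<in> P \<rightarrow>\<^sub>M P"
    using measurable_relabel_on[OF f A] by (simp add: measurable_cong_sets[OF sets_P sets_P])
  have "(\<lambda>z. g (fst z) \<noteq> snd z) \<in> Mx \<Otimes>\<^sub>M count_space UNIV \<rightarrow>\<^sub>M count_space UNIV"
    using g by measurable
  then have "{z \<in> space P. g (fst z) \<noteq> snd z} \<in> sets P"
    using sets_P sets_eq_imp_space_eq[OF sets_P] by (simp add: pred_def)
  then have "risk (distr P P (relabel_on A f)) g =
      measure P (relabel_on A f -` {z \<in> space P. g (fst z) \<noteq> snd z} \<inter> space P)"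
    by (simp add: risk_def measure_distr[OF relabel_meas])
  also have "relabel_on A f -` {z \<in> space P. g (fst z) \<noteq> snd z} \<inter> space P =
      {z \<in> space P. if fst z \<in> A then g (fst z) \<noteq> f (fst z) else g (fst z) \<noteq> snd z}"
  proof -
    have "(fst z, f (fst z)) \<in> space P" if "z \<in> space P" "fst z \<in> A" for z
      using measurable_space[OF relabel_meas that(1)] that(2) by (simp add: relabel_on_def)
    then show ?thesis by (auto simp: relabel_on_def)
  qed
  finally show ?thesis .
qed

lemma risk_relabel_on_gap_le:
  fixes P :: "('x \<times> bool) measure"
  assumes "finite_measure P" and sets_P: "sets P = sets (Mx \<Otimes>\<^sub>M count_space UNIV)"
    and f: "f \<in> Mx \<rightarrow>\<^sub>M count_space UNIV" and g: "g \<in> Mx \<rightarrow>\<^sub>M count_space UNIV"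
    and A: "A \<inter> space Mx \<in> sets Mx"
  shows "risk (distr P P (relabel_on A f)) f - risk (distr P P (relabel_on A f)) g
    \<le> risk P f - risk P g"
proof -
  interpret finite_measure P by fact
  let ?Q = "distr P P (relabel_on A f)"
  have sets_pred: "{z \<in> space P. p z} \<in> sets P"
    if "Measurable.pred (Mx \<Otimes>\<^sub>M count_space UNIV) p" for p
    using that sets_P sets_eq_imp_space_eq[OF sets_P] by (simp add: pred_def)
  define E_f where "E_f = {z \<in> space P. fst z \<notin> A \<and> f (fst z) \<noteq> snd z}"
  define D where "D = {z \<in> space P. fst z \<in> A \<and> f (fst z) \<noteq> snd z}"
  define E_g where
    "E_g = {z \<in> space P. if fst z \<in> A then g (fst z) \<noteq> f (fst z) else g (fst z) \<noteq> snd z}"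
  have E_f: "E_f \<in> sets P" and D: "D \<in> sets P" and E_g: "E_g \<in> sets P"
    unfolding E_f_def D_def E_g_def
    by (intro sets_pred; use pred_fst_in_pair_count_space[OF A] f g in measurable)+
  have "risk ?Q f = measure P E_f"
    unfolding risk_distr_relabel_on[OF sets_P f f A] E_f_def
    by (intro arg_cong[where f="measure P"]) auto
  moreover have "risk ?Q g = measure P E_g"
    unfolding risk_distr_relabel_on[OF sets_P f g A] E_g_def ..
  moreover have "risk P f = measure P E_f + measure P D"
  proof -
    have "risk P f = measure P (E_f \<union> D)"
      unfolding risk_def E_f_def D_def by (intro arg_cong[where f="measure P"]) auto
    then show ?thesis using E_f D by (simp add: finite_measure_Union E_f_def D_def disjoint_iff)
  qed
  moreover have "risk P g \<le> measure P E_g + measure P D"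
  proof -
    \<comment> \<open>Inside A, an error of g either survives relabelling or lies where g agrees with f, an error of f.\<close>
    have "{z \<in> space P. g (fst z) \<noteq> snd z} \<subseteq> E_g \<union> D"
      unfolding E_g_def D_def by auto
    then have "risk P g \<le> measure P (E_g \<union> D)"
      unfolding risk_def using E_g D by (intro finite_measure_mono) auto
    also have "\<dots> \<le> measure P E_g + measure P D"
      using E_g D by (rule measure_Un_le)
    finally show ?thesis .
  qed
  ultimately show ?thesis by linarith
qed

theorem lemma10:
  fixes Mx :: "'x measure" and P :: "('x \<times> bool) measure"
    and F G :: "('x \<Rightarrow> bool) set" and fstar :: "'x \<Rightarrow> bool"
  assumes "prob_space P"
    and "sets P = sets (Mx \<Otimes>\<^sub>M count_space UNIV)"
    and "\<And>f. f \<in> F \<Longrightarrow> f \<in> Mx \<rightarrow>\<^sub>M count_space UNIV"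
    and "AGR G \<inter> space Mx \<in> sets Mx"
    and "G \<subseteq> F"
    and "is_risk_minimizer P F fstar"
    and "fstar \<in> G"
  shows "is_risk_minimizer (relabeled_dist P G) F fstar"
proof -
  have Q: "relabeled_dist P G = distr P P (relabel_on (AGR G) fstar)"
    unfolding relabeled_dist_def relabel_eq_relabel_on[OF assms(7)] ..
  have finite: "finite_measure P"
    using assms(1) by (simp add: prob_space_def)
  have fstar: "fstar \<in> F" and min: "\<And>g. g \<in> F \<Longrightarrow> risk P fstar \<le> risk P g"
    using assms(6) by (auto simp: is_risk_minimizer_def)
  have "risk (relabeled_dist P G) fstar \<le> risk (relabeled_dist P G) g" if g: "g \<in> F" for g
    using risk_relabel_on_gap_le[OF finite assms(2) assms(3)[OF fstar] assms(3)[OF g] assms(4)]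
      min[OF g]
    unfolding Q by linarith
  then show ?thesis
    using fstar by (simp add: is_risk_minimizer_def)
qed

end
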